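(* Let $F$ and $\hat F$ be distribution functions on $\mathbb R$ with finite second moments, and for $t\in\mathbb R$ let $\gamma(t)=1-F(t)$ and $\hat\gamma(t)=1-\hat F(t)$ be the p-values of the statistic value $t$ computed under $F$ and $\hat F$, respectively. Let $\phi(\xi)=\sup_{z\in\mathbb R}\big(F(z+\xi)-F(z)\big)$. Then for every $t\in\mathbb R$, $$|\hat\gamma(t)-\gamma(t)|\le d_2(\hat F,F)^{2/3}+\phi\big(d_2(\hat F,F)^{2/3}\big).$$
   Context: $d_2(\hat F,F)$ denotes the Wasserstein-2 distance between the distributions with CDFs $\hat F$ and $F$. *)

theory Defs
  imports "HOL-Probability.Probability"
begin

definition couplings :: "real measure \<Rightarrow> real measure \<Rightarrow> (real \<times> real) measure set" where
  "couplings M N = {\<pi>. prob_space \<pi> \<and> sets \<pi> = sets (borel \<Otimes>\<^sub>M borel) \<and>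
      distr \<pi> borel fst = M \<and> distr \<pi> borel snd = N}"

definition wasserstein2 :: "real measure \<Rightarrow> real measure \<Rightarrow> real" where
  "wasserstein2 M N =
     sqrt (enn2real (INF \<pi>\<in>couplings M N. \<integral>\<^sup>+ p. ennreal ((fst p - snd p)\<^sup>2) \<partial>\<pi>))"

end

theory Submission
  imports Defs
begin

text \<open>Let \<open>d\<close> be the Wasserstein-2 distance and take a coupling \<open>(X, Y)\<close> of \<open>Fh\<close> and \<open>F\<close>
  with \<open>E (X - Y)\<^sup>2\<close> arbitrarily close to \<open>d\<^sup>2\<close>. On the event \<open>X \<le> t\<close> either \<open>Y \<le> t + \<delta>\<close> or
  \<open>(X - Y)\<^sup>2 \<ge> \<delta>\<^sup>2\<close>, so Markov's inequality gives \<open>Fh t \<le> F (t + \<delta>) + d\<^sup>2 / \<delta>\<^sup>2\<close>, and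
  symmetrically \<open>F (t - \<delta>) \<le> Fh t + d\<^sup>2 / \<delta>\<^sup>2\<close>. The choice \<open>\<delta> = d powr (2/3)\<close> makes
  \<open>d\<^sup>2 / \<delta>\<^sup>2 = \<delta>\<close>, and \<open>F (t \<plusminus> \<delta>)\<close> differs from \<open>F t\<close> by at most \<open>\<phi> \<delta>\<close>. If \<open>d = 0\<close>
  the bounds hold for every \<open>\<delta> > 0\<close>, and right continuity of the distribution functions
  gives \<open>Fh t = F t\<close>.\<close>

lemma (in prob_space) prob_le_shifted_prob_plus_moment:
  fixes X Y :: "'a \<Rightarrow> real"
  assumes [measurable]: "random_variable borel X" "random_variable borel Y"
    and sq_diff_integrable: "integrable M (\<lambda>\<omega>. (X \<omega> - Y \<omega>)\<^sup>2)" and "\<delta> > 0"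
  shows "prob {\<omega>\<in>space M. X \<omega> \<le> s}
    \<le> prob {\<omega>\<in>space M. Y \<omega> \<le> s + \<delta>} + expectation (\<lambda>\<omega>. (X \<omega> - Y \<omega>)\<^sup>2) / \<delta>\<^sup>2"
proof -
  have "{\<omega>\<in>space M. X \<omega> \<le> s}
      \<subseteq> {\<omega>\<in>space M. Y \<omega> \<le> s + \<delta>} \<union> {\<omega>\<in>space M. \<delta>\<^sup>2 \<le> (X \<omega> - Y \<omega>)\<^sup>2}"
  proof (intro subsetI)
    fix \<omega> assume "\<omega> \<in> {\<omega>\<in>space M. X \<omega> \<le> s}"
    moreover have "\<delta>\<^sup>2 \<le> (X \<omega> - Y \<omega>)\<^sup>2" if "X \<omega> \<le> s" "s + \<delta> < Y \<omega>"
      using power_mono[of \<delta> "Y \<omega> - X \<omega>" 2] that \<open>\<delta> > 0\<close> by (simp add: power2_commute)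
    ultimately show "\<omega> \<in> {\<omega>\<in>space M. Y \<omega> \<le> s + \<delta>} \<union> {\<omega>\<in>space M. \<delta>\<^sup>2 \<le> (X \<omega> - Y \<omega>)\<^sup>2}"
      by (auto simp: not_le[symmetric])
  qed
  then have "prob {\<omega>\<in>space M. X \<omega> \<le> s}
      \<le> prob ({\<omega>\<in>space M. Y \<omega> \<le> s + \<delta>} \<union> {\<omega>\<in>space M. \<delta>\<^sup>2 \<le> (X \<omega> - Y \<omega>)\<^sup>2})"
    by (intro finite_measure_mono) measurable
  also have "\<dots> \<le> prob {\<omega>\<in>space M. Y \<omega> \<le> s + \<delta>} + prob {\<omega>\<in>space M. \<delta>\<^sup>2 \<le> (X \<omega> - Y \<omega>)\<^sup>2}"
    by (intro measure_Un_le) measurable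
  also have "prob {\<omega>\<in>space M. \<delta>\<^sup>2 \<le> (X \<omega> - Y \<omega>)\<^sup>2} \<le> expectation (\<lambda>\<omega>. (X \<omega> - Y \<omega>)\<^sup>2) / \<delta>\<^sup>2"
    using sq_diff_integrable \<open>\<delta> > 0\<close> by (intro integral_Markov_inequality_measure) auto
  finally show ?thesis by simp
qed

lemma coupling_cdf_le_shift:
  assumes \<pi>: "\<pi> \<in> couplings A B" and sq_diff_integrable: "integrable \<pi> (\<lambda>p. (fst p - snd p)\<^sup>2)"
    and "\<delta> > 0"
  shows "cdf A s \<le> cdf B (s + \<delta>) + (\<integral>p. (fst p - snd p)\<^sup>2 \<partial>\<pi>) / \<delta>\<^sup>2"
    and "cdf B s \<le> cdf A (s + \<delta>) + (\<integral>p. (fst p - snd p)\<^sup>2 \<partial>\<pi>) / \<delta>\<^sup>2"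
proof -
  interpret prob_space \<pi> using \<pi> by (simp add: couplings_def)
  have sets: "sets \<pi> = sets (borel \<Otimes>\<^sub>M borel)"
    and marginals: "distr \<pi> borel fst = A" "distr \<pi> borel snd = B"
    using \<pi> by (simp_all add: couplings_def)
  have [measurable]: "fst \<in> borel_measurable \<pi>" "snd \<in> borel_measurable \<pi>"
    by (simp_all add: measurable_cong_sets[OF sets refl])
  have cdf_distr: "cdf (distr \<pi> borel f) s = prob {p\<in>space \<pi>. f p \<le> s}"
    if "f \<in> borel_measurable \<pi>" for f s
    using that unfolding cdf_def by (subst measure_distr) (auto simp: vimage_def Int_def conj_commute)
  show "cdf A s \<le> cdf B (s + \<delta>) + (\<integral>p. (fst p - snd p)\<^sup>2 \<partial>\<pi>) / \<delta>\<^sup>2"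
    using prob_le_shifted_prob_plus_moment[of fst snd, OF _ _ sq_diff_integrable \<open>\<delta> > 0\<close>]
    by (simp add: cdf_distr flip: marginals)
  show "cdf B s \<le> cdf A (s + \<delta>) + (\<integral>p. (fst p - snd p)\<^sup>2 \<partial>\<pi>) / \<delta>\<^sup>2"
    using prob_le_shifted_prob_plus_moment[of snd fst, OF _ _ _ \<open>\<delta> > 0\<close>] sq_diff_integrable
    by (simp add: cdf_distr power2_commute flip: marginals)
qed

lemma coupling_integrable_sq_diff:
  assumes \<pi>: "\<pi> \<in> couplings A B"
    and "integrable A (\<lambda>x. x\<^sup>2)" and "integrable B (\<lambda>x. x\<^sup>2)"
  shows "integrable \<pi> (\<lambda>p. (fst p - snd p)\<^sup>2)"
proof -
  have sets: "sets \<pi> = sets (borel \<Otimes>\<^sub>M borel)"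
    and marginals: "distr \<pi> borel fst = A" "distr \<pi> borel snd = B"
    using \<pi> by (simp_all add: couplings_def)
  have [measurable]: "fst \<in> borel_measurable \<pi>" "snd \<in> borel_measurable \<pi>"
    by (simp_all add: measurable_cong_sets[OF sets refl])
  have "integrable \<pi> (\<lambda>p. (fst p)\<^sup>2)" "integrable \<pi> (\<lambda>p. (snd p)\<^sup>2)"
    using assms(2,3) by (simp_all add: integrable_distr_eq flip: marginals)
  then have "integrable \<pi> (\<lambda>p. 2 * (fst p)\<^sup>2 + 2 * (snd p)\<^sup>2)"
    by auto
  then show ?thesis
  proof (rule Bochner_Integration.integrable_bound[OF _ _ AE_I2])
    have "(x - y)\<^sup>2 \<le> 2 * x\<^sup>2 + 2 * y\<^sup>2" for x y :: real
      using zero_le_power2[of "x + y"] unfolding power2_diff power2_sum by linarith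
    then show "norm ((fst p - snd p)\<^sup>2) \<le> norm (2 * (fst p)\<^sup>2 + 2 * (snd p)\<^sup>2)" for p :: "real \<times> real"
      by simp
  qed measurable
qed

lemma product_coupling:
  assumes "real_distribution A" and "real_distribution B"
  shows "A \<Otimes>\<^sub>M B \<in> couplings A B"
proof -
  interpret A: real_distribution A by fact
  interpret B: real_distribution B by fact
  interpret pair_prob_space A B ..
  have "distr (A \<Otimes>\<^sub>M B) borel fst = distr (A \<Otimes>\<^sub>M B) A fst"
    by (rule distr_cong) simp_all
  also have "\<dots> = A"
    by (rule B.distr_pair_fst)
  finally have fst: "distr (A \<Otimes>\<^sub>M B) borel fst = A" .
  have "distr (A \<Otimes>\<^sub>M B) borel snd = distr (A \<Otimes>\<^sub>M B) B snd"
    by (rule distr_cong) simp_all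
  also have "\<dots> = distr (B \<Otimes>\<^sub>M A) B fst"
    by (subst distr_pair_swap) (simp add: distr_distr comp_def case_prod_unfold)
  also have "\<dots> = B"
    by (rule A.distr_pair_fst)
  finally have snd: "distr (A \<Otimes>\<^sub>M B) borel snd = B" .
  have "sets (A \<Otimes>\<^sub>M B) = sets (borel \<Otimes>\<^sub>M borel)"
    by (rule sets_pair_measure_cong) simp_all
  with fst snd show ?thesis
    unfolding couplings_def using prob_space_axioms by simp
qed

lemma exists_coupling_cost_less_wasserstein2:
  assumes "real_distribution A" and "real_distribution B"
    and moments: "integrable A (\<lambda>x. x\<^sup>2)" "integrable B (\<lambda>x. x\<^sup>2)" and "\<epsilon> > 0"
  shows "\<exists>\<pi>\<in>couplings A B. (\<integral>p. (fst p - snd p)\<^sup>2 \<partial>\<pi>) < (wasserstein2 A B)\<^sup>2 + \<epsilon>"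
proof -
  define I where "I = (INF \<pi>\<in>couplings A B. \<integral>\<^sup>+ p. ennreal ((fst p - snd p)\<^sup>2) \<partial>\<pi>)"
  have cost_eq: "(\<integral>\<^sup>+ p. ennreal ((fst p - snd p)\<^sup>2) \<partial>\<pi>) = ennreal (\<integral>p. (fst p - snd p)\<^sup>2 \<partial>\<pi>)"
    if "\<pi> \<in> couplings A B" for \<pi>
    using coupling_integrable_sq_diff[OF that moments] by (intro nn_integral_eq_integral) auto
  have product: "A \<Otimes>\<^sub>M B \<in> couplings A B"
    using assms(1,2) by (rule product_coupling)
  have "I < \<infinity>"
    using INF_lower[OF product, of "\<lambda>\<pi>. \<integral>\<^sup>+ p. ennreal ((fst p - snd p)\<^sup>2) \<partial>\<pi>"]
    by (simp add: I_def cost_eq[OF product] order_le_less_trans)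
  then have "I = ennreal ((wasserstein2 A B)\<^sup>2)"
    by (simp add: wasserstein2_def I_def[symmetric])
  then have "I < ennreal ((wasserstein2 A B)\<^sup>2 + \<epsilon>)"
    using \<open>\<epsilon> > 0\<close> by (simp add: ennreal_less_iff)
  then obtain \<pi> where "\<pi> \<in> couplings A B"
    and "ennreal (\<integral>p. (fst p - snd p)\<^sup>2 \<partial>\<pi>) < ennreal ((wasserstein2 A B)\<^sup>2 + \<epsilon>)"
    unfolding I_def INF_less_iff using cost_eq by auto
  then show ?thesis
    by (auto simp: ennreal_less_iff)
qed

lemma cdf_le_shift_wasserstein2:
  assumes "real_distribution A" and "real_distribution B"
    and "integrable A (\<lambda>x. x\<^sup>2)" "integrable B (\<lambda>x. x\<^sup>2)" and "\<delta> > 0"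
  shows "cdf A s \<le> cdf B (s + \<delta>) + (wasserstein2 A B)\<^sup>2 / \<delta>\<^sup>2"
    and "cdf B s \<le> cdf A (s + \<delta>) + (wasserstein2 A B)\<^sup>2 / \<delta>\<^sup>2"
proof -
  have "cdf A s \<le> cdf B (s + \<delta>) + (wasserstein2 A B)\<^sup>2 / \<delta>\<^sup>2 + e \<and>
      cdf B s \<le> cdf A (s + \<delta>) + (wasserstein2 A B)\<^sup>2 / \<delta>\<^sup>2 + e" if "e > 0" for e
  proof -
    obtain \<pi> where \<pi>: "\<pi> \<in> couplings A B"
      and cost: "(\<integral>p. (fst p - snd p)\<^sup>2 \<partial>\<pi>) < (wasserstein2 A B)\<^sup>2 + e * \<delta>\<^sup>2"
      using exists_coupling_cost_less_wasserstein2[OF assms(1-4), of "e * \<delta>\<^sup>2"] \<open>e > 0\<close> \<open>\<delta> > 0\<close>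
      by auto
    have "(\<integral>p. (fst p - snd p)\<^sup>2 \<partial>\<pi>) / \<delta>\<^sup>2 \<le> (wasserstein2 A B)\<^sup>2 / \<delta>\<^sup>2 + e"
      using cost \<open>\<delta> > 0\<close> by (simp add: field_simps)
    moreover note coupling_cdf_le_shift[OF \<pi> coupling_integrable_sq_diff[OF \<pi> assms(3,4)] \<open>\<delta> > 0\<close>, of s]
    ultimately show ?thesis
      by linarith
  qed
  then show "cdf A s \<le> cdf B (s + \<delta>) + (wasserstein2 A B)\<^sup>2 / \<delta>\<^sup>2"
    and "cdf B s \<le> cdf A (s + \<delta>) + (wasserstein2 A B)\<^sup>2 / \<delta>\<^sup>2"
    by (auto intro: field_le_epsilon)
qed

lemma (in real_distribution) cdf_ge_if_right_shifts_ge: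
  assumes "\<And>\<eta>. \<eta> > 0 \<Longrightarrow> a \<le> cdf M (t + \<eta>)"
  shows "a \<le> cdf M t"
proof (rule tendsto_lowerbound)
  show "(cdf M \<longlongrightarrow> cdf M t) (at_right t)"
    using cdf_is_right_cont by (simp add: continuous_within)
  show "\<forall>\<^sub>F y in at_right t. a \<le> cdf M y"
    using eventually_at_right_less[of t] assms[of "y - t" for y] by (auto elim: eventually_mono)
qed simp

lemma (in real_distribution) cdf_increment_le_SUP:
  "cdf M (z + \<xi>) - cdf M z \<le> (SUP y. cdf M (y + \<xi>) - cdf M y)"
proof (rule cSUP_upper)
  show "bdd_above (range (\<lambda>y. cdf M (y + \<xi>) - cdf M y))"
    by (intro bdd_aboveI[of _ 1]) (smt (verit) cdf_bounded_prob cdf_nonneg rangeE)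
qed simp

lemma abs_cdf_diff_le_wasserstein2:
  assumes "real_distribution A" and "real_distribution B"
    and "integrable A (\<lambda>x. x\<^sup>2)" "integrable B (\<lambda>x. x\<^sup>2)" and "\<delta> > 0"
  shows "\<bar>cdf A t - cdf B t\<bar> \<le> (wasserstein2 A B)\<^sup>2 / \<delta>\<^sup>2 + (SUP z. cdf B (z + \<delta>) - cdf B z)"
proof -
  interpret B: real_distribution B by fact
  note shift = cdf_le_shift_wasserstein2[OF assms]
  show ?thesis
    using shift(1)[of t] shift(2)[of "t - \<delta>"]
      B.cdf_increment_le_SUP[of t \<delta>] B.cdf_increment_le_SUP[of "t - \<delta>" \<delta>]
    unfolding abs_le_iff by simp
qed

lemma cdf_eq_if_wasserstein2_eq_0:
  assumes "real_distribution A" and "real_distribution B"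
    and "integrable A (\<lambda>x. x\<^sup>2)" "integrable B (\<lambda>x. x\<^sup>2)" and "wasserstein2 A B = 0"
  shows "cdf A t = cdf B t"
proof -
  interpret A: real_distribution A by fact
  interpret B: real_distribution B by fact
  note shift = cdf_le_shift_wasserstein2[OF assms(1-4)]
  have "cdf A t \<le> cdf B t"
    by (rule B.cdf_ge_if_right_shifts_ge) (use shift(1) assms(5) in simp)
  moreover have "cdf B t \<le> cdf A t"
    by (rule A.cdf_ge_if_right_shifts_ge) (use shift(2) assms(5) in simp)
  ultimately show ?thesis
    by simp
qed

lemma sq_div_sq_powr_two_thirds:
  fixes d :: real
  assumes "d > 0"
  shows "d\<^sup>2 / (d powr (2/3))\<^sup>2 = d powr (2/3)"
proof -
  have "d\<^sup>2 / (d powr (2/3))\<^sup>2 = d powr 2 / d powr (4/3)"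
    using assms by (simp add: powr_power)
  also have "\<dots> = d powr (2/3)"
    by (simp flip: powr_diff)
  finally show ?thesis .
qed

theorem lemma3:
  fixes M Mh :: "real measure" and t :: real
  assumes "real_distribution M" and "real_distribution Mh"
    and "integrable M (\<lambda>x. x\<^sup>2)" and "integrable Mh (\<lambda>x. x\<^sup>2)"
  shows "let F = cdf M; Fh = cdf Mh;
             \<gamma> = (\<lambda>s. 1 - F s); \<gamma>h = (\<lambda>s. 1 - Fh s);
             \<phi> = (\<lambda>\<xi>. SUP z. F (z + \<xi>) - F z);
             d = wasserstein2 Mh M
         in \<bar>\<gamma>h t - \<gamma> t\<bar> \<le> d powr (2/3) + \<phi> (d powr (2/3))"
proof -
  define d where "d = wasserstein2 Mh M"
  have "d \<ge> 0"
    by (simp add: d_def wasserstein2_def)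
  have "\<bar>cdf Mh t - cdf M t\<bar> \<le> d powr (2/3) + (SUP z. cdf M (z + d powr (2/3)) - cdf M z)"
  proof (cases "d = 0")
    case True
    then show ?thesis
      using cdf_eq_if_wasserstein2_eq_0[OF assms(2,1,4,3), of t] by (simp add: d_def)
  next
    case False
    with \<open>d \<ge> 0\<close> have "d > 0"
      by simp
    then show ?thesis
      using abs_cdf_diff_le_wasserstein2[OF assms(2,1,4,3), of "d powr (2/3)" t]
      by (simp add: sq_div_sq_powr_two_thirds flip: d_def)
  qed
  then show ?thesis
    by (simp add: Let_def d_def abs_minus_commute)
qed

end
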